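(* Let $\Sigma=(X,\mathcal{S},\phi)$ be a forward complete dynamical system whose transition map $\phi$ is $\mathcal{S}$-uniformly continuous, and assume there exist $t_1>0$, $G_0>0$ such that $\|\phi(t,x,\sigma)\|\le G_0\|x\|$ for all $t\in[0,t_1]$, $x\in X$, $\sigma\in\mathcal{S}$. Then the following are equivalent: (i) $\Sigma$ is UGES; (ii) there exist a continuous functional $V:X\to\mathbb{R}_+$ and positive reals $p,\underline{c},\overline{c}$ such that $\underline{c}\|x\|^p\le V(x)\le\overline{c}\|x\|^p$ for all $x\in X$ and $\overline{D}_\sigma V(x)\le-\|x\|^p$ for all $x\in X$, $\sigma\in\mathcal{S}$; (iii) there exist a functional $V:X\to\mathbb{R}_+$ and positive reals $p,c$ such that for every $x\in X$ and $\sigma\in\mathcal{S}$ the map $t\mapsto V(\phi(t,x,\sigma))$ is continuous from the left, $\overline{D}_\sigma V(x)\le-\|x\|^p$ for all $x\in X$, $\sigma\in\mathcal{S}$, and $V(x)\le c\|x\|^p$ for all $x\in X$.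
   Context: $(X,\|\cdot\|)$ is a Banach space and $B_X(x,r)$ is the closed ball of center $x$ and radius $r$. Let $\mathcal{Q}$ be a nonempty set and $\mathcal{S}$ a set of functions $\sigma:\mathbb{R}_+\to\mathcal{Q}$ closed by time-shift (for $\sigma\in\mathcal{S}$, $\tau\ge0$, $\mathbb{T}_\tau\sigma:s\mapsto\sigma(\tau+s)$ is in $\mathcal{S}$) and by concatenation (for $\sigma_1,\sigma_2\in\mathcal{S}$, $\tau>0$, the function equal to $\sigma_1$ on $[0,\tau]$ and with $\sigma(\tau+t)=\sigma_2(t)$ for $t>0$ is in $\mathcal{S}$). A triple $\Sigma=(X,\mathcal{S},\phi)$ with $\phi:\mathbb{R}_+\times X\times\mathcal{S}\to X$ is a forward complete dynamical system if: $\phi(0,x,\sigma)=x$; $\phi(t,x,\tilde\sigma)=\phi(t,x,\sigma)$ whenever $\tilde\sigma=\sigma$ on $[0,t]$; $t\mapsto\phi(t,x,\sigma)$ is continuous; $\phi(\tau,\phi(t,x,\sigma),\mathbb{T}_t\sigma)=\phi(t+\tau,x,\sigma)$ for all $t,\tau\ge0$. $\Sigma$ is UGES if there exist $M,\lambda>0$ with $\|\phi(t,x,\sigma)\|\le Me^{-\lambda t}\|x\|$ for all $t\ge0$, $x\in X$, $\sigma\in\mathcal{S}$. The upper Dini derivative is $\overline{D}_\sigma V(x)=\limsup_{h\downarrow0}\frac1h\big(V(\phi(h,x,\sigma))-V(x)\big)$. $\phi$ is $\mathcal{S}$-uniformly continuous if for every $\bar t>0$, $x\in X$, $\varepsilon>0$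 there is $\eta>0$ with $\|\phi(t,x,\sigma)-\phi(t,y,\sigma)\|\le\varepsilon$ for all $t\in[0,\bar t]$, $y\in B_X(x,\eta)$, $\sigma\in\mathcal{S}$. *)

theory Defs
  imports "HOL-Analysis.Analysis"
begin

text \<open>Inputs are modelled as functions real => 'q; only their values on [0,inf) matter.
  Time shift and concatenation.\<close>

definition tshift :: "real \<Rightarrow> (real \<Rightarrow> 'q) \<Rightarrow> (real \<Rightarrow> 'q)" where
  "tshift \<tau> \<sigma> = (\<lambda>s. \<sigma> (\<tau> + s))"

definition concat_at :: "real \<Rightarrow> (real \<Rightarrow> 'q) \<Rightarrow> (real \<Rightarrow> 'q) \<Rightarrow> (real \<Rightarrow> 'q)" where
  "concat_at \<tau> \<sigma>1 \<sigma>2 = (\<lambda>s. if s \<le> \<tau> then \<sigma>1 s else \<sigma>2 (s - \<tau>))"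

definition admissible_inputs :: "(real \<Rightarrow> 'q) set \<Rightarrow> bool" where
  "admissible_inputs S \<longleftrightarrow>
     (\<forall>\<sigma>\<in>S. \<forall>\<tau>\<ge>0. tshift \<tau> \<sigma> \<in> S) \<and>
     (\<forall>\<sigma>1\<in>S. \<forall>\<sigma>2\<in>S. \<forall>\<tau>>0. concat_at \<tau> \<sigma>1 \<sigma>2 \<in> S)"

definition forward_complete_system ::
  "(real \<Rightarrow> 'q) set \<Rightarrow> (real \<Rightarrow> 'x::banach \<Rightarrow> (real \<Rightarrow> 'q) \<Rightarrow> 'x) \<Rightarrow> bool" where
  "forward_complete_system S \<phi> \<longleftrightarrow>
     admissible_inputs S \<and>
     (\<forall>x. \<forall>\<sigma>\<in>S. \<phi> 0 x \<sigma> = x) \<and>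
     (\<forall>t\<ge>0. \<forall>x. \<forall>\<sigma>\<in>S. \<forall>\<sigma>'\<in>S. (\<forall>s\<in>{0..t}. \<sigma>' s = \<sigma> s) \<longrightarrow> \<phi> t x \<sigma>' = \<phi> t x \<sigma>) \<and>
     (\<forall>x. \<forall>\<sigma>\<in>S. continuous_on {0..} (\<lambda>t. \<phi> t x \<sigma>)) \<and>
     (\<forall>t\<ge>0. \<forall>\<tau>\<ge>0. \<forall>x. \<forall>\<sigma>\<in>S. \<phi> \<tau> (\<phi> t x \<sigma>) (tshift t \<sigma>) = \<phi> (t + \<tau>) x \<sigma>)"

definition UGES ::
  "(real \<Rightarrow> 'q) set \<Rightarrow> (real \<Rightarrow> 'x::real_normed_vector \<Rightarrow> (real \<Rightarrow> 'q) \<Rightarrow> 'x) \<Rightarrow> bool" where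
  "UGES S \<phi> \<longleftrightarrow> (\<exists>M>0. \<exists>lam>0. \<forall>t\<ge>0. \<forall>x. \<forall>\<sigma>\<in>S.
      norm (\<phi> t x \<sigma>) \<le> M * exp (- lam * t) * norm x)"

definition dini_upper ::
  "(real \<Rightarrow> 'x \<Rightarrow> (real \<Rightarrow> 'q) \<Rightarrow> 'x) \<Rightarrow> ('x \<Rightarrow> real) \<Rightarrow> (real \<Rightarrow> 'q) \<Rightarrow> 'x \<Rightarrow> ereal" where
  "dini_upper \<phi> V \<sigma> x = Limsup (at_right 0) (\<lambda>h. ereal ((V (\<phi> h x \<sigma>) - V x) / h))"

definition S_uniformly_continuous ::
  "(real \<Rightarrow> 'q) set \<Rightarrow> (real \<Rightarrow> 'x::real_normed_vector \<Rightarrow> (real \<Rightarrow> 'q) \<Rightarrow> 'x) \<Rightarrow> bool" where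
  "S_uniformly_continuous S \<phi> \<longleftrightarrow>
     (\<forall>tb>0. \<forall>x. \<forall>\<epsilon>>0. \<exists>\<eta>>0. \<forall>t\<in>{0..tb}. \<forall>y\<in>cball x \<eta>. \<forall>\<sigma>\<in>S.
        norm (\<phi> t x \<sigma> - \<phi> t y \<sigma>) \<le> \<epsilon>)"

end

theory Submission
  imports Defs
begin

(* (i) implies (ii): for 0 < mu < lam the weighted orbit supremum
   W x = sup {exp (mu t) * norm (phi t x sigma) | t >= 0, sigma in S} is equivalent to the norm and,
   since inputs can be concatenated, decays like exp (- mu h) along every trajectory; S-uniform
   continuity of phi makes it continuous, and W / mu is a Lyapunov function with p = 1.
   (ii) implies (iii) trivially.
   (iii) implies (i): a comparison principle for upper Dini derivatives turns
   D+ V <= - norm ^ p <= - V / c into exponential decay of y t = V (phi t x sigma). Since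
   norm (phi t x sigma) <= G0 * norm (phi s x sigma) for s in [t - t1, t], y also drops at least by
   t1 * (norm (phi t x sigma) / G0) ^ p over that window; as y stays nonnegative, this bounds
   norm (phi t x sigma) ^ p by y (t - t1), which decays exponentially. *)

section \<open>Comparison principle for upper Dini derivatives\<close>

definition dini_right_upper :: "(real \<Rightarrow> real) \<Rightarrow> real \<Rightarrow> ereal" where
  "dini_right_upper y s = Limsup (at_right 0) (\<lambda>h. ereal ((y (s + h) - y s) / h))"

lemma nonpos_by_right_continuation:
  fixes f :: "real \<Rightarrow> real"
  assumes "a \<le> b" and "f a \<le> 0"
    and left: "\<And>s. a < s \<Longrightarrow> s \<le> b \<Longrightarrow> (f \<longlongrightarrow> f s) (at_left s)"
    and step: "\<And>s. a \<le> s \<Longrightarrow> s < b \<Longrightarrow> f s \<le> 0 \<Longrightarrow> \<forall>\<^sub>F h in at_right 0. f (s + h) \<le> 0"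
  shows "f b \<le> 0"
proof -
  define A where "A = {t. a \<le> t \<and> t \<le> b \<and> (\<forall>r. a \<le> r \<and> r \<le> t \<longrightarrow> f r \<le> 0)}"
  define s where "s = Sup A"
  have "a \<in> A" using assms(1,2) by (auto simp: A_def)
  have bdd: "bdd_above A" unfolding A_def by (rule bdd_aboveI[of _ b]) auto
  have "a \<le> s" unfolding s_def using \<open>a \<in> A\<close> bdd by (rule cSup_upper)
  have "s \<le> b" unfolding s_def using \<open>a \<in> A\<close> by (intro cSup_least) (auto simp: A_def)
  have below: "f r \<le> 0" if r: "a \<le> r" "r < s" for r
  proof -
    obtain t where "t \<in> A" "r < t" using less_cSupE[of r A] \<open>a \<in> A\<close> r(2) by (auto simp: s_def)
    then show ?thesis using r by (auto simp: A_def)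
  qed
  have "f s \<le> 0"
  proof (cases "s = a")
    case False
    then have "a < s" using \<open>a \<le> s\<close> by simp
    have "\<forall>\<^sub>F r in at_left s. f r \<le> 0"
      unfolding eventually_at_left_field using \<open>a < s\<close> below by (intro exI[of _ a]) auto
    with left[OF \<open>a < s\<close> \<open>s \<le> b\<close>] show ?thesis
      by (intro tendsto_upperbound[OF _ _ trivial_limit_at_left_real])
  qed (use assms(2) in simp)
  have "s = b"
  proof (rule ccontr)
    assume "s \<noteq> b"
    then have "s < b" using \<open>s \<le> b\<close> by simp
    obtain d where "d > 0" and d: "\<And>h. 0 < h \<Longrightarrow> h < d \<Longrightarrow> f (s + h) \<le> 0"
      using step[OF \<open>a \<le> s\<close> \<open>s < b\<close> \<open>f s \<le> 0\<close>] by (auto simp: eventually_at_right_field)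
    define s' where "s' = s + min d (b - s) / 2"
    have s': "s < s'" "s' \<le> b" "s' - s < d"
      using \<open>s < b\<close> \<open>d > 0\<close> by (auto simp: s'_def min_def field_simps)
    have "s' \<in> A"
      unfolding A_def
    proof safe
      show "a \<le> s'" "s' \<le> b" using \<open>a \<le> s\<close> s' by auto
      fix r assume "a \<le> r" "r \<le> s'"
      show "f r \<le> 0"
      proof (cases "r \<le> s")
        case True then show ?thesis using below \<open>a \<le> r\<close> \<open>f s \<le> 0\<close> by (auto simp: le_less)
      next
        case False
        then have "f (s + (r - s)) \<le> 0"
          using \<open>r \<le> s'\<close> s' by (intro d) auto
        then show ?thesis by simp
      qed
    qed
    then have "s' \<le> s" unfolding s_def using bdd by (rule cSup_upper)
    then show False using s' by simp
  qed
  then show ?thesis using \<open>f s \<le> 0\<close> by simp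
qed

lemma eventually_le_at_right_of_dini:
  fixes y w :: "real \<Rightarrow> real"
  assumes w: "(w has_real_derivative w') (at s)"
    and le: "y s \<le> w s"
    and finite: "dini_right_upper y s < \<infinity>"
    and touching: "y s = w s \<Longrightarrow> dini_right_upper y s < ereal w'"
  shows "\<forall>\<^sub>F h in at_right 0. y (s + h) \<le> w (s + h)"
proof -
  have pos: "\<forall>\<^sub>F h in at_right (0::real). 0 < h" by (simp add: eventually_at_right_less)
  have quotient_below: "\<forall>\<^sub>F h in at_right 0. y (s + h) - y s < L * h"
    if "dini_right_upper y s < ereal L" for L
    using Limsup_lessD[OF that[unfolded dini_right_upper_def]] pos
    by eventually_elim (simp add: field_simps)
  show ?thesis
  proof (cases "y s = w s")
    case True
    obtain L where L: "dini_right_upper y s < ereal L" "L < w'"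
      using ereal_dense2[OF touching[OF True]] by auto
    have "((\<lambda>h. (w (s + h) - w s) / h) \<longlongrightarrow> w') (at_right 0)"
      using w by (simp add: DERIV_def filterlim_at_split)
    then have "\<forall>\<^sub>F h in at_right 0. L < (w (s + h) - w s) / h"
      using L(2) by (rule order_tendstoD(1))
    then have "\<forall>\<^sub>F h in at_right 0. L * h < w (s + h) - w s"
      using pos by eventually_elim (auto simp: field_simps)
    with quotient_below[OF L(1)] show ?thesis
      by eventually_elim (use True in linarith)
  next
    case False
    obtain L where L: "dini_right_upper y s < ereal L"
      using ereal_dense2[OF finite] by auto
    have "((\<lambda>h. w (s + h) - L * h) \<longlongrightarrow> w s - L * 0) (at 0)"
      using DERIV_isCont[OF w] by (intro tendsto_intros) (simp add: isCont_iff)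
    then have "((\<lambda>h. w (s + h) - L * h) \<longlongrightarrow> w s) (at_right 0)"
      by (simp add: filterlim_at_split)
    then have "\<forall>\<^sub>F h in at_right 0. y s < w (s + h) - L * h"
      using False le by (intro order_tendstoD(1)) auto
    with quotient_below[OF L] show ?thesis
      by eventually_elim linarith
  qed
qed

lemma dini_comparison:
  fixes y w w' :: "real \<Rightarrow> real"
  assumes "a \<le> b" and "y a \<le> w a"
    and left: "\<And>s. a < s \<Longrightarrow> s \<le> b \<Longrightarrow> (y \<longlongrightarrow> y s) (at_left s)"
    and w: "\<And>s. (w has_real_derivative w' s) (at s)"
    and finite: "\<And>s. a \<le> s \<Longrightarrow> s < b \<Longrightarrow> dini_right_upper y s < \<infinity>"
    and touching: "\<And>s. a \<le> s \<Longrightarrow> s < b \<Longrightarrow> y s = w s \<Longrightarrow> dini_right_upper y s < ereal (w' s)"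
  shows "y b \<le> w b"
proof -
  have "(\<lambda>s. y s - w s) b \<le> 0"
  proof (rule nonpos_by_right_continuation[OF \<open>a \<le> b\<close>])
    show "y a - w a \<le> 0" using \<open>y a \<le> w a\<close> by simp
    fix s
    show "((\<lambda>s. y s - w s) \<longlongrightarrow> y s - w s) (at_left s)" if "a < s" "s \<le> b"
      using left[OF that] DERIV_isCont[OF w, of s]
      by (intro tendsto_diff) (auto simp: isCont_def filterlim_at_split)
    assume "a \<le> s" "s < b" "y s - w s \<le> 0"
    then have "\<forall>\<^sub>F h in at_right 0. y (s + h) \<le> w (s + h)"
      by (intro eventually_le_at_right_of_dini[OF w] finite touching) auto
    then show "\<forall>\<^sub>F h in at_right 0. y (s + h) - w (s + h) \<le> 0"
      by eventually_elim simp
  qed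
  then show ?thesis by simp
qed

lemma dini_exp_decay:
  fixes y :: "real \<Rightarrow> real"
  assumes "0 \<le> \<alpha>" "\<alpha> < \<beta>" "0 \<le> y 0" "0 \<le> r"
    and left: "\<And>s. 0 < s \<Longrightarrow> s \<le> r \<Longrightarrow> (y \<longlongrightarrow> y s) (at_left s)"
    and dini: "\<And>s. 0 \<le> s \<Longrightarrow> s < r \<Longrightarrow> dini_right_upper y s \<le> ereal (- \<beta> * y s)"
  shows "y r \<le> y 0 * exp (- \<alpha> * r)"
proof (rule field_le_epsilon)
  fix e :: real assume "0 < e"
  define w where "w s = (y 0 + e) * exp (- \<alpha> * s)" for s
  have w_pos: "0 < w s" for s using \<open>0 \<le> y 0\<close> \<open>0 < e\<close> by (simp add: w_def)
  have "y r \<le> w r"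
  proof (rule dini_comparison[OF \<open>0 \<le> r\<close> _ left])
    show "(w has_real_derivative - \<alpha> * w s) (at s)" for s
      unfolding w_def by (auto intro!: derivative_eq_intros)
    show "y 0 \<le> w 0" using \<open>0 < e\<close> by (simp add: w_def)
    fix s assume s: "0 \<le> s" "s < r"
    then show "dini_right_upper y s < \<infinity>"
      using dini[OF s] by (auto intro: le_less_trans)
    have "- \<beta> * w s < - \<alpha> * w s" using \<open>\<alpha> < \<beta>\<close> w_pos[of s] by simp
    then show "dini_right_upper y s < ereal (- \<alpha> * w s)" if "y s = w s"
      using dini[OF s] that by (auto intro: le_less_trans)
  qed simp
  also have "w r \<le> y 0 * exp (- \<alpha> * r) + e"
    using \<open>0 \<le> \<alpha>\<close> \<open>0 \<le> r\<close> \<open>0 < e\<close> by (simp add: w_def algebra_simps mult_le_cancel_left1)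
  finally show "y r \<le> y 0 * exp (- \<alpha> * r) + e" .
qed

lemma dini_linear_decrease:
  fixes y :: "real \<Rightarrow> real"
  assumes "a \<le> b"
    and left: "\<And>s. a < s \<Longrightarrow> s \<le> b \<Longrightarrow> (y \<longlongrightarrow> y s) (at_left s)"
    and dini: "\<And>s. a \<le> s \<Longrightarrow> s < b \<Longrightarrow> dini_right_upper y s \<le> ereal (- K)"
  shows "y b \<le> y a - K * (b - a)"
proof (rule field_le_epsilon)
  fix e :: real assume "0 < e"
  define \<epsilon> where "\<epsilon> = e / (1 + (b - a))"
  have "0 < \<epsilon>" using \<open>0 < e\<close> \<open>a \<le> b\<close> by (simp add: \<epsilon>_def)
  define w where "w s = y a + \<epsilon> - (K - \<epsilon>) * (s - a)" for s
  have "y b \<le> w b"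
  proof (rule dini_comparison[OF \<open>a \<le> b\<close> _ left])
    show "(w has_real_derivative - (K - \<epsilon>)) (at s)" for s
      unfolding w_def by (auto intro!: derivative_eq_intros)
    show "y a \<le> w a" using \<open>0 < \<epsilon>\<close> by (simp add: w_def)
    fix s assume s: "a \<le> s" "s < b"
    have "dini_right_upper y s < ereal (- (K - \<epsilon>))"
      using dini[OF s] \<open>0 < \<epsilon>\<close> by (auto intro: le_less_trans)
    then show "dini_right_upper y s < \<infinity>" "dini_right_upper y s < ereal (- (K - \<epsilon>))"
      by auto
  qed simp
  also have "w b = y a - K * (b - a) + \<epsilon> * (1 + (b - a))" by (simp add: w_def algebra_simps)
  also have "\<epsilon> * (1 + (b - a)) = e" using \<open>a \<le> b\<close> by (simp add: \<epsilon>_def)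
  finally show "y b \<le> y a - K * (b - a) + e" .
qed

section \<open>Trajectories of forward complete systems\<close>

lemma S_uniformly_continuousD:
  assumes "S_uniformly_continuous S \<phi>" "0 < tb" "0 < \<epsilon>"
  obtains \<eta> where "0 < \<eta>"
    "\<And>t y1 y2 \<sigma>. t \<in> {0..tb} \<Longrightarrow> y1 \<in> cball x \<eta> \<Longrightarrow> y2 \<in> cball x \<eta> \<Longrightarrow> \<sigma> \<in> S \<Longrightarrow>
      dist (\<phi> t y1 \<sigma>) (\<phi> t y2 \<sigma>) \<le> \<epsilon>"
proof -
  obtain \<eta> where "0 < \<eta>"
    and \<eta>: "\<forall>t\<in>{0..tb}. \<forall>y\<in>cball x \<eta>. \<forall>\<sigma>\<in>S. norm (\<phi> t x \<sigma> - \<phi> t y \<sigma>) \<le> \<epsilon> / 2"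
    using assms(1)[unfolded S_uniformly_continuous_def, rule_format, of tb "\<epsilon> / 2" x] assms(2,3)
    by auto
  have "dist (\<phi> t y1 \<sigma>) (\<phi> t y2 \<sigma>) \<le> \<epsilon>"
    if "t \<in> {0..tb}" "y1 \<in> cball x \<eta>" "y2 \<in> cball x \<eta>" "\<sigma> \<in> S" for t y1 y2 \<sigma>
  proof -
    have "dist (\<phi> t x \<sigma>) (\<phi> t y1 \<sigma>) \<le> \<epsilon> / 2" "dist (\<phi> t x \<sigma>) (\<phi> t y2 \<sigma>) \<le> \<epsilon> / 2"
      using \<eta> that by (simp_all add: dist_norm)
    then show ?thesis using dist_triangle3[of "\<phi> t y1 \<sigma>" "\<phi> t y2 \<sigma>" "\<phi> t x \<sigma>"] by linarith
  qed
  with \<open>0 < \<eta>\<close> show ?thesis using that by blast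
qed

context
  fixes S :: "(real \<Rightarrow> 'q) set" and \<phi> :: "real \<Rightarrow> 'x::banach \<Rightarrow> (real \<Rightarrow> 'q) \<Rightarrow> 'x"
  assumes sys: "forward_complete_system S \<phi>"
begin

lemma tshift_in_inputs: "\<sigma> \<in> S \<Longrightarrow> 0 \<le> \<tau> \<Longrightarrow> tshift \<tau> \<sigma> \<in> S"
  using sys unfolding forward_complete_system_def admissible_inputs_def by (elim conjE) blast

lemma concat_in_inputs: "\<sigma>1 \<in> S \<Longrightarrow> \<sigma>2 \<in> S \<Longrightarrow> 0 < \<tau> \<Longrightarrow> concat_at \<tau> \<sigma>1 \<sigma>2 \<in> S"
  using sys unfolding forward_complete_system_def admissible_inputs_def by (elim conjE) blast

lemma flow_0: "\<sigma> \<in> S \<Longrightarrow> \<phi> 0 x \<sigma> = x"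
  using sys unfolding forward_complete_system_def by (elim conjE) blast

lemma flow_causal:
  assumes "0 \<le> t" "\<sigma> \<in> S" "\<sigma>' \<in> S" "\<And>s. 0 \<le> s \<Longrightarrow> s \<le> t \<Longrightarrow> \<sigma>' s = \<sigma> s"
  shows "\<phi> t x \<sigma>' = \<phi> t x \<sigma>"
proof -
  have "\<forall>t\<ge>0. \<forall>x. \<forall>\<sigma>\<in>S. \<forall>\<sigma>'\<in>S. (\<forall>s\<in>{0..t}. \<sigma>' s = \<sigma> s) \<longrightarrow> \<phi> t x \<sigma>' = \<phi> t x \<sigma>"
    using sys unfolding forward_complete_system_def by (elim conjE)
  then show ?thesis using assms by (meson atLeastAtMost_iff)
qed

lemma flow_continuous: "\<sigma> \<in> S \<Longrightarrow> continuous_on {0..} (\<lambda>t. \<phi> t x \<sigma>)"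
  using sys unfolding forward_complete_system_def by (elim conjE) blast

lemma flow_cocycle:
  "0 \<le> t \<Longrightarrow> 0 \<le> \<tau> \<Longrightarrow> \<sigma> \<in> S \<Longrightarrow> \<phi> \<tau> (\<phi> t x \<sigma>) (tshift t \<sigma>) = \<phi> (t + \<tau>) x \<sigma>"
  using sys unfolding forward_complete_system_def by (elim conjE) blast

lemma flow_tendsto_at_right:
  assumes "\<sigma> \<in> S" "0 \<le> t"
  shows "((\<lambda>h. \<phi> (t + h) x \<sigma>) \<longlongrightarrow> \<phi> t x \<sigma>) (at_right 0)"
proof -
  have "((\<lambda>s. \<phi> s x \<sigma>) \<longlongrightarrow> \<phi> t x \<sigma>) (at t within {0..})"
    using flow_continuous[OF assms(1)] assms(2) by (simp add: continuous_on_def)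
  then have "((\<lambda>s. \<phi> s x \<sigma>) \<longlongrightarrow> \<phi> t x \<sigma>) (at_right t)"
    by (rule tendsto_within_subset) (use assms(2) in auto)
  then show ?thesis by (simp add: filterlim_at_right_to_0[of _ _ t] add.commute)
qed

lemma flow_concat_shifted:
  assumes "0 < h" "0 < \<delta>" "\<delta> \<le> t" "\<sigma> \<in> S" "\<sigma>' \<in> S"
  shows "\<phi> (t + h) x (concat_at h \<sigma> \<sigma>') = \<phi> (t - \<delta>) (\<phi> (h + \<delta>) x (concat_at h \<sigma> \<sigma>')) (tshift \<delta> \<sigma>')"
proof -
  define w where "w = concat_at h \<sigma> \<sigma>'"
  have "w \<in> S" using concat_in_inputs assms by (simp add: w_def)
  have "\<phi> (t + h) x w = \<phi> (t - \<delta>) (\<phi> (h + \<delta>) x w) (tshift (h + \<delta>) w)"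
    using flow_cocycle[of "h + \<delta>" "t - \<delta>" w x] assms \<open>w \<in> S\<close> by (simp add: add.commute)
  also have "\<dots> = \<phi> (t - \<delta>) (\<phi> (h + \<delta>) x w) (tshift \<delta> \<sigma>')"
  proof (rule flow_causal)
    show "tshift (h + \<delta>) w s = tshift \<delta> \<sigma>' s" if "0 \<le> s" for s
      using that assms by (simp add: tshift_def w_def concat_at_def)
  qed (use assms \<open>w \<in> S\<close> tshift_in_inputs in auto)
  finally show ?thesis by (simp add: w_def)
qed

text \<open>The shifted input \<^term>\<open>tshift h (concat_at h \<sigma> \<sigma>')\<close> agrees with \<open>\<sigma>'\<close> only on
  \<open>(0, \<infinity>)\<close>, not at time 0, so causality alone does not identify the two trajectories;
  they are compared after a short time \<open>\<delta>\<close>, when both are near \<open>\<phi> h x \<sigma>\<close>.\<close>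

lemma flow_concat:
  assumes uc: "S_uniformly_continuous S \<phi>"
    and "0 < h" "0 \<le> t" "\<sigma> \<in> S" "\<sigma>' \<in> S"
  shows "\<phi> t (\<phi> h x \<sigma>) \<sigma>' = \<phi> (t + h) x (concat_at h \<sigma> \<sigma>')"
proof -
  define w where "w = concat_at h \<sigma> \<sigma>'"
  define z where "z = \<phi> h x \<sigma>"
  have "w \<in> S" using concat_in_inputs assms by (simp add: w_def)
  have "\<phi> h x w = z"
    using flow_causal[of h \<sigma> w] assms \<open>w \<in> S\<close> by (auto simp: w_def z_def concat_at_def)
  show ?thesis
  proof (cases "t = 0")
    case True
    then show ?thesis using flow_0 \<open>\<phi> h x w = z\<close> \<open>\<sigma>' \<in> S\<close> by (simp add: w_def z_def)
  next
    case False
    then have "0 < t" using \<open>0 \<le> t\<close> by simp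
    have "dist (\<phi> t z \<sigma>') (\<phi> (t + h) x w) \<le> 0 + \<epsilon>" if "0 < \<epsilon>" for \<epsilon>
    proof -
      obtain \<eta> where "0 < \<eta>" and \<eta>: "\<And>s y1 y2 \<sigma>. s \<in> {0..t} \<Longrightarrow> y1 \<in> cball z \<eta> \<Longrightarrow>
          y2 \<in> cball z \<eta> \<Longrightarrow> \<sigma> \<in> S \<Longrightarrow> dist (\<phi> s y1 \<sigma>) (\<phi> s y2 \<sigma>) \<le> \<epsilon>"
        using S_uniformly_continuousD[OF uc \<open>0 < t\<close> \<open>0 < \<epsilon>\<close>] by blast
      have "\<forall>\<^sub>F \<delta> in at_right 0. dist (\<phi> (h + \<delta>) x w) z < \<eta>"
        using tendstoD[OF flow_tendsto_at_right[OF \<open>w \<in> S\<close>, of h x] \<open>0 < \<eta>\<close>] \<open>0 < h\<close>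
        by (simp add: \<open>\<phi> h x w = z\<close>)
      moreover have "\<forall>\<^sub>F \<delta> in at_right 0. dist (\<phi> \<delta> z \<sigma>') z < \<eta>"
        using tendstoD[OF flow_tendsto_at_right[OF \<open>\<sigma>' \<in> S\<close>, of 0 z] \<open>0 < \<eta>\<close>]
        by (simp add: flow_0[OF \<open>\<sigma>' \<in> S\<close>])
      moreover have "\<forall>\<^sub>F \<delta> in at_right 0. 0 < \<delta> \<and> \<delta> < t"
        using \<open>0 < t\<close> by (auto simp: eventually_at_right_field)
      ultimately have "\<forall>\<^sub>F \<delta> in at_right 0.
          dist (\<phi> (h + \<delta>) x w) z < \<eta> \<and> dist (\<phi> \<delta> z \<sigma>') z < \<eta> \<and> 0 < \<delta> \<and> \<delta> < t"
        by (simp add: eventually_conj_iff)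
      then obtain \<delta> where near: "dist (\<phi> (h + \<delta>) x w) z < \<eta>" "dist (\<phi> \<delta> z \<sigma>') z < \<eta>"
        and "0 < \<delta>" "\<delta> < t"
        using eventually_happens'[OF trivial_limit_at_right_real] by blast
      have "\<phi> (t + h) x w = \<phi> (t - \<delta>) (\<phi> (h + \<delta>) x w) (tshift \<delta> \<sigma>')"
        using flow_concat_shifted \<open>0 < h\<close> \<open>0 < \<delta>\<close> \<open>\<delta> < t\<close> \<open>\<sigma> \<in> S\<close> \<open>\<sigma>' \<in> S\<close> by (simp add: w_def)
      moreover have "\<phi> t z \<sigma>' = \<phi> (t - \<delta>) (\<phi> \<delta> z \<sigma>') (tshift \<delta> \<sigma>')"
        using flow_cocycle[of \<delta> "t - \<delta>" \<sigma>' z] \<open>0 < \<delta>\<close> \<open>\<delta> < t\<close> \<open>\<sigma>' \<in> S\<close> by simp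
      ultimately show ?thesis
        using \<eta>[of "t - \<delta>" "\<phi> \<delta> z \<sigma>'" "\<phi> (h + \<delta>) x w" "tshift \<delta> \<sigma>'"] near
          tshift_in_inputs[OF \<open>\<sigma>' \<in> S\<close>] \<open>0 < \<delta>\<close> \<open>\<delta> < t\<close>
        by (simp add: dist_commute)
    qed
    then have "dist (\<phi> t z \<sigma>') (\<phi> (t + h) x w) \<le> 0"
      by (rule field_le_epsilon)
    then show ?thesis by (simp add: w_def z_def)
  qed
qed

lemma dini_right_upper_along_flow:
  assumes "\<sigma> \<in> S" "0 \<le> s"
  shows "dini_right_upper (\<lambda>s. V (\<phi> s x \<sigma>)) s = dini_upper \<phi> V (tshift s \<sigma>) (\<phi> s x \<sigma>)"
  unfolding dini_right_upper_def dini_upper_def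
proof (rule Limsup_eq)
  show "\<forall>\<^sub>F h in at_right 0. ereal ((V (\<phi> (s + h) x \<sigma>) - V (\<phi> s x \<sigma>)) / h) =
          ereal ((V (\<phi> h (\<phi> s x \<sigma>) (tshift s \<sigma>)) - V (\<phi> s x \<sigma>)) / h)"
  proof (rule eventually_at_rightI[of 0 1])
    fix h :: real assume "h \<in> {0<..<1}"
    then show "ereal ((V (\<phi> (s + h) x \<sigma>) - V (\<phi> s x \<sigma>)) / h) =
        ereal ((V (\<phi> h (\<phi> s x \<sigma>) (tshift s \<sigma>)) - V (\<phi> s x \<sigma>)) / h)"
      using flow_cocycle[of s h \<sigma> x] assms by simp
  qed simp
qed

end

section \<open>Non-coercive Lyapunov functions imply UGES\<close>

definition Lyapunov_function ::
  "(real \<Rightarrow> 'q) set \<Rightarrow> (real \<Rightarrow> 'x \<Rightarrow> (real \<Rightarrow> 'q) \<Rightarrow> 'x) \<Rightarrow> ('x::real_normed_vector \<Rightarrow> real)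
    \<Rightarrow> real \<Rightarrow> real \<Rightarrow> real \<Rightarrow> bool" where
  "Lyapunov_function S \<phi> V p cl cu \<longleftrightarrow>
     continuous_on UNIV V \<and> (\<forall>x. V x \<ge> 0) \<and>
     (\<forall>x. cl * norm x powr p \<le> V x \<and> V x \<le> cu * norm x powr p) \<and>
     (\<forall>x. \<forall>\<sigma>\<in>S. dini_upper \<phi> V \<sigma> x \<le> ereal (- (norm x powr p)))"

definition noncoercive_Lyapunov_function ::
  "(real \<Rightarrow> 'q) set \<Rightarrow> (real \<Rightarrow> 'x \<Rightarrow> (real \<Rightarrow> 'q) \<Rightarrow> 'x) \<Rightarrow> ('x::real_normed_vector \<Rightarrow> real)
    \<Rightarrow> real \<Rightarrow> real \<Rightarrow> bool" where
  "noncoercive_Lyapunov_function S \<phi> V p c \<longleftrightarrow>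
     (\<forall>x. V x \<ge> 0) \<and>
     (\<forall>x. \<forall>\<sigma>\<in>S. \<forall>t>0. ((\<lambda>s. V (\<phi> s x \<sigma>)) \<longlongrightarrow> V (\<phi> t x \<sigma>)) (at_left t)) \<and>
     (\<forall>x. \<forall>\<sigma>\<in>S. dini_upper \<phi> V \<sigma> x \<le> ereal (- (norm x powr p))) \<and>
     (\<forall>x. V x \<le> c * norm x powr p)"

lemma Lyapunov_function_imp_noncoercive:
  fixes \<phi> :: "real \<Rightarrow> 'x::banach \<Rightarrow> (real \<Rightarrow> 'q) \<Rightarrow> 'x"
  assumes sys: "forward_complete_system S \<phi>" and V: "Lyapunov_function S \<phi> V p cl cu"
  shows "noncoercive_Lyapunov_function S \<phi> V p cu"
proof -
  have "((\<lambda>s. V (\<phi> s x \<sigma>)) \<longlongrightarrow> V (\<phi> t x \<sigma>)) (at_left t)" if "\<sigma> \<in> S" "0 < t" for x \<sigma> t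
  proof -
    have "continuous_on {0..} (\<lambda>s. V (\<phi> s x \<sigma>))"
      using V flow_continuous[OF sys \<open>\<sigma> \<in> S\<close>]
      by (auto simp: Lyapunov_function_def intro: continuous_on_compose2)
    then have "isCont (\<lambda>s. V (\<phi> s x \<sigma>)) t"
      by (rule continuous_on_interior) (use \<open>0 < t\<close> in simp)
    then show ?thesis by (simp add: isCont_def filterlim_at_split)
  qed
  with V show ?thesis by (simp add: Lyapunov_function_def noncoercive_Lyapunov_function_def)
qed

lemma UGES_intro:
  assumes "0 < t1" "0 < G0" "0 < p" "0 < \<alpha>" "0 \<le> C"
    and small_time: "\<And>t x \<sigma>. t \<in> {0..t1} \<Longrightarrow> \<sigma> \<in> S \<Longrightarrow> norm (\<phi> t x \<sigma>) \<le> G0 * norm x"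
    and large_time: "\<And>t x \<sigma>. t1 \<le> t \<Longrightarrow> \<sigma> \<in> S \<Longrightarrow>
      norm (\<phi> t x \<sigma>) powr p \<le> C * exp (- \<alpha> * t) * norm x powr p"
  shows "UGES S \<phi>"
proof -
  define lam where "lam = \<alpha> / p"
  define M where "M = max (G0 * exp (lam * t1)) (C powr (1 / p))"
  have "0 < lam" using assms by (simp add: lam_def)
  have "0 < M" using \<open>0 < G0\<close> by (simp add: M_def less_max_iff_disj)
  have "norm (\<phi> t x \<sigma>) \<le> M * exp (- lam * t) * norm x" if "0 \<le> t" "\<sigma> \<in> S" for t x \<sigma>
  proof (cases "t \<le> t1")
    case True
    have "G0 = G0 * exp (lam * t1) * exp (- lam * t1)" by (simp add: exp_minus)
    also have "\<dots> \<le> M * exp (- lam * t)"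
      using True \<open>0 < lam\<close> \<open>0 < G0\<close> \<open>0 < M\<close> by (intro mult_mono) (auto simp: M_def)
    finally have "G0 * norm x \<le> M * exp (- lam * t) * norm x" by (simp add: mult_right_mono)
    with small_time[of t \<sigma> x] that True show ?thesis by simp
  next
    case False
    have "norm (\<phi> t x \<sigma>) = (norm (\<phi> t x \<sigma>) powr p) powr (1 / p)"
      using \<open>0 < p\<close> by (simp add: powr_powr)
    also have "\<dots> \<le> (C * exp (- \<alpha> * t) * norm x powr p) powr (1 / p)"
      using large_time[of t \<sigma> x] False that \<open>0 < p\<close> by (intro powr_mono2) auto
    also have "\<dots> = C powr (1 / p) * exp (- lam * t) * norm x"
      using \<open>0 \<le> C\<close> \<open>0 < p\<close> by (simp add: powr_mult powr_powr exp_powr_real lam_def)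
    also have "\<dots> \<le> M * exp (- lam * t) * norm x"
      by (intro mult_right_mono) (auto simp: M_def)
    finally show ?thesis .
  qed
  then show ?thesis unfolding UGES_def using \<open>0 < M\<close> \<open>0 < lam\<close> by blast
qed

lemma flow_norm_le_earlier:
  fixes \<phi> :: "real \<Rightarrow> 'x::banach \<Rightarrow> (real \<Rightarrow> 'q) \<Rightarrow> 'x"
  assumes sys: "forward_complete_system S \<phi>"
    and small_time: "\<And>t x \<sigma>. t \<in> {0..t1} \<Longrightarrow> \<sigma> \<in> S \<Longrightarrow> norm (\<phi> t x \<sigma>) \<le> G0 * norm x"
    and "\<sigma> \<in> S" "0 \<le> s" "s \<le> t" "t \<le> s + t1"
  shows "norm (\<phi> t x \<sigma>) \<le> G0 * norm (\<phi> s x \<sigma>)"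
proof -
  have "\<phi> t x \<sigma> = \<phi> (t - s) (\<phi> s x \<sigma>) (tshift s \<sigma>)"
    using flow_cocycle[OF sys, of s "t - s" \<sigma> x] assms by simp
  then show ?thesis
    using small_time[of "t - s" "tshift s \<sigma>"] tshift_in_inputs[OF sys] assms by simp
qed

lemma noncoercive_Lyapunov_function_dini_along_flow:
  fixes \<phi> :: "real \<Rightarrow> 'x::banach \<Rightarrow> (real \<Rightarrow> 'q) \<Rightarrow> 'x"
  assumes sys: "forward_complete_system S \<phi>" and V: "noncoercive_Lyapunov_function S \<phi> V p c"
    and "\<sigma> \<in> S" "0 \<le> s"
  shows "dini_right_upper (\<lambda>s. V (\<phi> s x \<sigma>)) s \<le> ereal (- (norm (\<phi> s x \<sigma>) powr p))"
  using V dini_right_upper_along_flow[OF sys assms(3,4)] tshift_in_inputs[OF sys assms(3,4)]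
  by (simp add: noncoercive_Lyapunov_function_def)

lemma noncoercive_Lyapunov_function_exp_decay:
  fixes \<phi> :: "real \<Rightarrow> 'x::banach \<Rightarrow> (real \<Rightarrow> 'q) \<Rightarrow> 'x"
  assumes sys: "forward_complete_system S \<phi>" and V: "noncoercive_Lyapunov_function S \<phi> V p c"
    and "0 < c" "\<sigma> \<in> S" "0 \<le> r"
  shows "V (\<phi> r x \<sigma>) \<le> c * norm x powr p * exp (- r / (2 * c))"
proof -
  have V_le: "V y \<le> c * norm y powr p" for y
    using V by (simp add: noncoercive_Lyapunov_function_def)
  have "V (\<phi> r x \<sigma>) \<le> V (\<phi> 0 x \<sigma>) * exp (- (1 / (2 * c)) * r)"
  proof (rule dini_exp_decay[where y = "\<lambda>s. V (\<phi> s x \<sigma>)", OF _ _ _ \<open>0 \<le> r\<close>])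
    show "0 \<le> 1 / (2 * c)" "1 / (2 * c) < 1 / c" using \<open>0 < c\<close> by (auto simp: field_simps)
    show "0 \<le> V (\<phi> 0 x \<sigma>)" using V by (simp add: noncoercive_Lyapunov_function_def)
    show "((\<lambda>s. V (\<phi> s x \<sigma>)) \<longlongrightarrow> V (\<phi> s x \<sigma>)) (at_left s)" if "0 < s" for s
      using V \<open>\<sigma> \<in> S\<close> that by (simp add: noncoercive_Lyapunov_function_def)
    fix s :: real assume "0 \<le> s"
    have "- (norm (\<phi> s x \<sigma>) powr p) \<le> - (1 / c) * V (\<phi> s x \<sigma>)"
      using V_le[of "\<phi> s x \<sigma>"] \<open>0 < c\<close> by (simp add: field_simps)
    then show "dini_right_upper (\<lambda>s. V (\<phi> s x \<sigma>)) s \<le> ereal (- (1 / c) * V (\<phi> s x \<sigma>))"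
      using noncoercive_Lyapunov_function_dini_along_flow[OF sys V \<open>\<sigma> \<in> S\<close> \<open>0 \<le> s\<close>, of x]
      by (auto intro: order_trans)
  qed
  also have "V (\<phi> 0 x \<sigma>) \<le> c * norm x powr p"
    using V_le flow_0[OF sys \<open>\<sigma> \<in> S\<close>] by simp
  finally show ?thesis by (simp add: mult_right_mono)
qed

lemma noncoercive_Lyapunov_function_decay:
  fixes \<phi> :: "real \<Rightarrow> 'x::banach \<Rightarrow> (real \<Rightarrow> 'q) \<Rightarrow> 'x"
  assumes sys: "forward_complete_system S \<phi>"
    and "0 < t1" "0 < G0"
    and small_time: "\<And>t x \<sigma>. t \<in> {0..t1} \<Longrightarrow> \<sigma> \<in> S \<Longrightarrow> norm (\<phi> t x \<sigma>) \<le> G0 * norm x"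
    and "0 < p" "0 < c" and V: "noncoercive_Lyapunov_function S \<phi> V p c"
    and "\<sigma> \<in> S" "t1 \<le> t"
  shows "norm (\<phi> t x \<sigma>) powr p
    \<le> G0 powr p * c * exp (t1 / (2 * c)) / t1 * exp (- t / (2 * c)) * norm x powr p"
proof -
  define K where "K = norm (\<phi> t x \<sigma>) powr p / G0 powr p"
  have K_le: "K \<le> norm (\<phi> s x \<sigma>) powr p" if "t - t1 \<le> s" "s \<le> t" for s
  proof -
    have "norm (\<phi> t x \<sigma>) \<le> G0 * norm (\<phi> s x \<sigma>)"
      using flow_norm_le_earlier[OF sys, of t1 G0, OF small_time \<open>\<sigma> \<in> S\<close>] that \<open>t1 \<le> t\<close> by simp
    then have "norm (\<phi> t x \<sigma>) powr p \<le> (G0 * norm (\<phi> s x \<sigma>)) powr p"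
      using \<open>0 < p\<close> by (intro powr_mono2) auto
    then show ?thesis using \<open>0 < G0\<close> by (simp add: K_def powr_mult field_simps)
  qed
  have "V (\<phi> t x \<sigma>) \<le> V (\<phi> (t - t1) x \<sigma>) - K * (t - (t - t1))"
  proof (rule dini_linear_decrease[where y = "\<lambda>s. V (\<phi> s x \<sigma>)"])
    show "((\<lambda>s. V (\<phi> s x \<sigma>)) \<longlongrightarrow> V (\<phi> s x \<sigma>)) (at_left s)" if "t - t1 < s" for s
      using V \<open>\<sigma> \<in> S\<close> that \<open>t1 \<le> t\<close> by (simp add: noncoercive_Lyapunov_function_def)
    fix s assume s: "t - t1 \<le> s" "s < t"
    then have "dini_right_upper (\<lambda>s. V (\<phi> s x \<sigma>)) s \<le> ereal (- (norm (\<phi> s x \<sigma>) powr p))"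
      using noncoercive_Lyapunov_function_dini_along_flow[OF sys V \<open>\<sigma> \<in> S\<close>] \<open>t1 \<le> t\<close> by simp
    also have "\<dots> \<le> ereal (- K)" using K_le s by simp
    finally show "dini_right_upper (\<lambda>s. V (\<phi> s x \<sigma>)) s \<le> ereal (- K)" .
  qed (use \<open>0 < t1\<close> in simp)
  moreover have "0 \<le> V (\<phi> t x \<sigma>)" using V by (simp add: noncoercive_Lyapunov_function_def)
  ultimately have "K * t1 \<le> c * norm x powr p * exp (- (t - t1) / (2 * c))"
    using noncoercive_Lyapunov_function_exp_decay[OF sys V \<open>0 < c\<close> \<open>\<sigma> \<in> S\<close>, of "t - t1" x]
      \<open>t1 \<le> t\<close> by simp
  then show ?thesis
    using \<open>0 < t1\<close> \<open>0 < G0\<close>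
    by (simp add: K_def field_simps exp_diff exp_minus diff_divide_distrib)
qed

lemma noncoercive_Lyapunov_function_imp_UGES:
  fixes \<phi> :: "real \<Rightarrow> 'x::banach \<Rightarrow> (real \<Rightarrow> 'q) \<Rightarrow> 'x"
  assumes sys: "forward_complete_system S \<phi>"
    and "0 < t1" "0 < G0"
    and small_time: "\<And>t x \<sigma>. t \<in> {0..t1} \<Longrightarrow> \<sigma> \<in> S \<Longrightarrow> norm (\<phi> t x \<sigma>) \<le> G0 * norm x"
    and "0 < p" "0 < c" and V: "noncoercive_Lyapunov_function S \<phi> V p c"
  shows "UGES S \<phi>"
proof (rule UGES_intro[OF \<open>0 < t1\<close> \<open>0 < G0\<close> \<open>0 < p\<close> _ _ small_time])
  show "0 < 1 / (2 * c)" "0 \<le> G0 powr p * c * exp (t1 / (2 * c)) / t1"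
    using \<open>0 < c\<close> \<open>0 < t1\<close> by auto
  fix t x \<sigma> assume "t1 \<le> t" "\<sigma> \<in> S"
  then show "norm (\<phi> t x \<sigma>) powr p
      \<le> G0 powr p * c * exp (t1 / (2 * c)) / t1 * exp (- (1 / (2 * c)) * t) * norm x powr p"
    using noncoercive_Lyapunov_function_decay[OF sys \<open>0 < t1\<close> \<open>0 < G0\<close> small_time \<open>0 < p\<close> \<open>0 < c\<close> V]
    by simp
qed

section \<open>A converse Lyapunov function\<close>

locale UGES_system =
  fixes S :: "(real \<Rightarrow> 'q) set" and \<phi> :: "real \<Rightarrow> 'x::banach \<Rightarrow> (real \<Rightarrow> 'q) \<Rightarrow> 'x"
    and M lam \<mu> :: real
  assumes system: "forward_complete_system S \<phi>"
    and uniformly_continuous: "S_uniformly_continuous S \<phi>"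
    and M_pos: "0 < M" and rate: "0 < \<mu>" "\<mu> < lam"
    and decay: "\<And>t x \<sigma>. 0 \<le> t \<Longrightarrow> \<sigma> \<in> S \<Longrightarrow> norm (\<phi> t x \<sigma>) \<le> M * exp (- lam * t) * norm x"
begin

text \<open>\<^term>\<open>norm x\<close> is the \<open>t = 0\<close> term of the supremum; it is added explicitly so that the set
  is nonempty also when \<^term>\<open>S = {}\<close>.\<close>

definition orbit_sup :: "'x \<Rightarrow> real" where
  "orbit_sup x = Sup (insert (norm x) ((\<lambda>(t, \<sigma>). exp (\<mu> * t) * norm (\<phi> t x \<sigma>)) ` ({0..} \<times> S)))"

lemma weighted_flow_le:
  assumes "0 \<le> t" "\<sigma> \<in> S"
  shows "exp (\<mu> * t) * norm (\<phi> t x \<sigma>) \<le> M * exp (- (lam - \<mu>) * t) * norm x"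
proof -
  have "exp (\<mu> * t) * norm (\<phi> t x \<sigma>) \<le> exp (\<mu> * t) * (M * exp (- lam * t) * norm x)"
    using decay[OF assms] by (intro mult_left_mono) auto
  also have "\<dots> = M * exp (- (lam - \<mu>) * t) * norm x"
    by (simp add: algebra_simps flip: exp_add)
  finally show ?thesis .
qed

lemma weighted_flow_le_norm:
  assumes "0 \<le> t" "\<sigma> \<in> S"
  shows "exp (\<mu> * t) * norm (\<phi> t x \<sigma>) \<le> max M 1 * norm x"
proof -
  have "M * exp (- (lam - \<mu>) * t) \<le> max M 1 * 1"
    using assms rate M_pos by (intro mult_mono) (auto simp: mult_nonpos_nonneg)
  then have "M * exp (- (lam - \<mu>) * t) * norm x \<le> max M 1 * norm x"
    by (simp add: mult_right_mono)
  with weighted_flow_le[OF assms, of x] show ?thesis by linarith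
qed

lemma bdd_above_weighted_flow:
  "bdd_above (insert (norm x) ((\<lambda>(t, \<sigma>). exp (\<mu> * t) * norm (\<phi> t x \<sigma>)) ` ({0..} \<times> S)))"
  using weighted_flow_le_norm
  by (intro bdd_aboveI[of _ "max M 1 * norm x"]) (auto simp: mult_le_cancel_right1)

lemma orbit_sup_upper:
  assumes "0 \<le> t" "\<sigma> \<in> S"
  shows "exp (\<mu> * t) * norm (\<phi> t x \<sigma>) \<le> orbit_sup x"
  unfolding orbit_sup_def using assms
  by (intro cSup_upper[OF _ bdd_above_weighted_flow]) (auto intro!: image_eqI[of _ _ "(t, \<sigma>)"])

lemma norm_le_orbit_sup: "norm x \<le> orbit_sup x"
  unfolding orbit_sup_def by (intro cSup_upper[OF _ bdd_above_weighted_flow]) simp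

lemma orbit_sup_least:
  assumes "norm x \<le> B" "\<And>t \<sigma>. 0 \<le> t \<Longrightarrow> \<sigma> \<in> S \<Longrightarrow> exp (\<mu> * t) * norm (\<phi> t x \<sigma>) \<le> B"
  shows "orbit_sup x \<le> B"
  unfolding orbit_sup_def using assms by (intro cSup_least) auto

lemma orbit_sup_le: "orbit_sup x \<le> max M 1 * norm x"
  using weighted_flow_le_norm by (intro orbit_sup_least) (auto simp: mult_le_cancel_right1)

text \<open>Each weighted term of \<^term>\<open>orbit_sup (\<phi> h x \<sigma>)\<close> is a weighted term of
  \<^term>\<open>orbit_sup x\<close> along the concatenated input, which has \<open>h\<close> more time of weight.\<close>

lemma orbit_sup_flow:
  assumes "0 < h" "\<sigma> \<in> S"
  shows "orbit_sup (\<phi> h x \<sigma>) \<le> exp (- \<mu> * h) * orbit_sup x"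
proof (rule orbit_sup_least)
  have "norm (\<phi> h x \<sigma>) = exp (- \<mu> * h) * (exp (\<mu> * h) * norm (\<phi> h x \<sigma>))"
    by (simp add: mult.assoc[symmetric] flip: exp_add)
  also have "\<dots> \<le> exp (- \<mu> * h) * orbit_sup x"
    using orbit_sup_upper assms by (intro mult_left_mono) auto
  finally show "norm (\<phi> h x \<sigma>) \<le> exp (- \<mu> * h) * orbit_sup x" .
next
  fix t :: real and \<sigma>' assume "0 \<le> t" "\<sigma>' \<in> S"
  define w where "w = concat_at h \<sigma> \<sigma>'"
  have "w \<in> S" using concat_in_inputs[OF system] assms \<open>\<sigma>' \<in> S\<close> by (simp add: w_def)
  have "exp (\<mu> * t) * norm (\<phi> t (\<phi> h x \<sigma>) \<sigma>') = exp (- \<mu> * h) * (exp (\<mu> * (t + h)) * norm (\<phi> (t + h) x w))"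
    using flow_concat[OF system uniformly_continuous assms(1) \<open>0 \<le> t\<close> assms(2) \<open>\<sigma>' \<in> S\<close>]
    by (simp add: w_def mult.assoc[symmetric] algebra_simps flip: exp_add)
  also have "\<dots> \<le> exp (- \<mu> * h) * orbit_sup x"
    using orbit_sup_upper \<open>0 \<le> t\<close> \<open>0 < h\<close> \<open>w \<in> S\<close> by (intro mult_left_mono) auto
  finally show "exp (\<mu> * t) * norm (\<phi> t (\<phi> h x \<sigma>) \<sigma>') \<le> exp (- \<mu> * h) * orbit_sup x" .
qed

lemma orbit_sup_nonneg: "0 \<le> orbit_sup x"
  using norm_le_orbit_sup[of x] norm_ge_zero[of x] by linarith

lemma weighted_flow_tail:
  assumes "0 < \<epsilon>"
  obtains T where "1 \<le> T"
    "\<And>t u \<sigma>. T \<le> t \<Longrightarrow> \<sigma> \<in> S \<Longrightarrow> norm u \<le> R \<Longrightarrow> exp (\<mu> * t) * norm (\<phi> t u \<sigma>) < \<epsilon>"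
proof -
  have "((\<lambda>T. M * exp (- (lam - \<mu>) * T) * R) \<longlongrightarrow> M * 0 * R) at_top"
    using rate
    by (intro tendsto_intros exp_at_bot[THEN filterlim_compose] filterlim_tendsto_neg_mult_at_bot
        filterlim_ident) auto
  then have "\<forall>\<^sub>F T in at_top. M * exp (- (lam - \<mu>) * T) * R < \<epsilon>"
    using \<open>0 < \<epsilon>\<close> by (intro order_tendstoD(2)) auto
  moreover have "\<forall>\<^sub>F T in at_top. 1 \<le> (T::real)" by (rule eventually_ge_at_top)
  ultimately have "\<forall>\<^sub>F T in at_top. M * exp (- (lam - \<mu>) * T) * R < \<epsilon> \<and> 1 \<le> T"
    by (rule eventually_conj)
  then obtain T where T: "M * exp (- (lam - \<mu>) * T) * R < \<epsilon>" and "1 \<le> T"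
    using eventually_happens'[OF trivial_limit_at_top_linorder] by blast
  have "exp (\<mu> * t) * norm (\<phi> t u \<sigma>) < \<epsilon>" if "T \<le> t" "\<sigma> \<in> S" "norm u \<le> R" for t u \<sigma>
  proof -
    have "exp (\<mu> * t) * norm (\<phi> t u \<sigma>) \<le> M * exp (- (lam - \<mu>) * t) * norm u"
      using weighted_flow_le \<open>1 \<le> T\<close> that by simp
    also have "\<dots> \<le> M * exp (- (lam - \<mu>) * T) * R"
      using that rate M_pos by (intro mult_mono) auto
    finally show ?thesis using T by linarith
  qed
  with \<open>1 \<le> T\<close> show ?thesis using that by blast
qed

lemma orbit_sup_le_near:
  assumes "0 < \<epsilon>"
  obtains \<eta> where "0 < \<eta>" "\<And>u v. u \<in> cball x \<eta> \<Longrightarrow> v \<in> cball x \<eta> \<Longrightarrow> orbit_sup u \<le> orbit_sup v + \<epsilon>"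
proof -
  obtain T where "1 \<le> T" and tail: "\<And>t u \<sigma>. T \<le> t \<Longrightarrow> \<sigma> \<in> S \<Longrightarrow> norm u \<le> norm x + 1 \<Longrightarrow>
      exp (\<mu> * t) * norm (\<phi> t u \<sigma>) < \<epsilon>"
    using weighted_flow_tail[OF \<open>0 < \<epsilon>\<close>] by blast
  define \<epsilon>' where "\<epsilon>' = \<epsilon> / exp (\<mu> * T)"
  obtain \<eta>0 where "0 < \<eta>0" and \<eta>0: "\<And>t u v \<sigma>. t \<in> {0..T} \<Longrightarrow> u \<in> cball x \<eta>0 \<Longrightarrow>
      v \<in> cball x \<eta>0 \<Longrightarrow> \<sigma> \<in> S \<Longrightarrow> dist (\<phi> t u \<sigma>) (\<phi> t v \<sigma>) \<le> \<epsilon>'"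
    using S_uniformly_continuousD[OF uniformly_continuous, of T \<epsilon>' x] \<open>1 \<le> T\<close> \<open>0 < \<epsilon>\<close>
    by (auto simp: \<epsilon>'_def)
  define \<eta> where "\<eta> = min (min \<eta>0 (\<epsilon> / 2)) 1"
  have "orbit_sup u \<le> orbit_sup v + \<epsilon>" if u: "u \<in> cball x \<eta>" and v: "v \<in> cball x \<eta>" for u v
  proof (rule orbit_sup_least)
    have "norm u \<le> norm v + dist u v" by (simp add: dist_norm norm_triangle_sub)
    also have "dist u v \<le> dist x u + dist x v" by (rule dist_triangle3)
    also have "\<dots> \<le> \<epsilon>" using u v by (auto simp: \<eta>_def)
    finally show "norm u \<le> orbit_sup v + \<epsilon>" using norm_le_orbit_sup[of v] by linarith
  next
    fix t :: real and \<sigma> assume "0 \<le> t" "\<sigma> \<in> S"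
    show "exp (\<mu> * t) * norm (\<phi> t u \<sigma>) \<le> orbit_sup v + \<epsilon>"
    proof (cases "t \<le> T")
      case True
      have "norm (\<phi> t u \<sigma>) \<le> norm (\<phi> t v \<sigma>) + \<epsilon>'"
        using \<eta>0[of t u v \<sigma>] norm_triangle_sub[of "\<phi> t u \<sigma>" "\<phi> t v \<sigma>"] True \<open>0 \<le> t\<close> \<open>\<sigma> \<in> S\<close> u v
        by (auto simp: \<eta>_def dist_norm)
      then have "exp (\<mu> * t) * norm (\<phi> t u \<sigma>) \<le> exp (\<mu> * t) * norm (\<phi> t v \<sigma>) + exp (\<mu> * t) * \<epsilon>'"
        by (simp add: distrib_left[symmetric])
      also have "exp (\<mu> * t) * \<epsilon>' \<le> exp (\<mu> * T) * \<epsilon>'"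
        using True rate \<open>0 < \<epsilon>\<close> by (intro mult_right_mono) (auto simp: \<epsilon>'_def)
      also have "exp (\<mu> * T) * \<epsilon>' = \<epsilon>" by (simp add: \<epsilon>'_def)
      finally show ?thesis using orbit_sup_upper[OF \<open>0 \<le> t\<close> \<open>\<sigma> \<in> S\<close>, of v] by linarith
    next
      case False
      have "norm u \<le> norm x + 1"
        using u norm_triangle_sub[of u x] by (auto simp: \<eta>_def dist_norm norm_minus_commute)
      then show ?thesis using tail[of t \<sigma> u] False \<open>\<sigma> \<in> S\<close> orbit_sup_nonneg[of v] by simp
    qed
  qed
  moreover have "0 < \<eta>" using \<open>0 < \<eta>0\<close> \<open>0 < \<epsilon>\<close> by (simp add: \<eta>_def)
  ultimately show ?thesis using that by blast
qed

lemma continuous_on_orbit_sup: "continuous_on UNIV orbit_sup"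
  unfolding continuous_on_iff
proof (intro ballI allI impI)
  fix x :: 'x and e :: real assume "0 < e"
  then obtain \<eta> where "0 < \<eta>"
    and near: "\<And>u v. u \<in> cball x \<eta> \<Longrightarrow> v \<in> cball x \<eta> \<Longrightarrow> orbit_sup u \<le> orbit_sup v + e / 2"
    using orbit_sup_le_near[of "e / 2" x] by auto
  have "dist (orbit_sup y) (orbit_sup x) < e" if "dist y x < \<eta>" for y
    using near[of x y] near[of y x] that \<open>0 < \<eta>\<close> \<open>0 < e\<close>
    by (auto simp: dist_real_def dist_commute abs_le_iff)
  with \<open>0 < \<eta>\<close> show "\<exists>d>0. \<forall>y\<in>UNIV. dist y x < d \<longrightarrow> dist (orbit_sup y) (orbit_sup x) < e"
    by auto
qed

lemma dini_upper_orbit_sup: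
  assumes "\<sigma> \<in> S"
  shows "dini_upper \<phi> (\<lambda>x. orbit_sup x / \<mu>) \<sigma> x \<le> ereal (- orbit_sup x)"
proof -
  have quotient: "((\<lambda>h. (exp (- \<mu> * h) - 1) / h) \<longlongrightarrow> - \<mu>) (at_right 0)"
  proof -
    have "((\<lambda>h. exp (- \<mu> * h)) has_real_derivative exp (- \<mu> * 0) * (- \<mu>)) (at 0)"
      by (auto intro!: derivative_eq_intros)
    then show ?thesis by (simp add: DERIV_def filterlim_at_split)
  qed
  have "dini_upper \<phi> (\<lambda>x. orbit_sup x / \<mu>) \<sigma> x
      \<le> Limsup (at_right 0) (\<lambda>h. ereal (orbit_sup x / \<mu> * ((exp (- \<mu> * h) - 1) / h)))"
    unfolding dini_upper_def
  proof (intro Limsup_mono eventually_at_rightI[of 0 1])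
    fix h :: real assume "h \<in> {0<..<1}"
    then have "orbit_sup (\<phi> h x \<sigma>) / \<mu> - orbit_sup x / \<mu> \<le> orbit_sup x / \<mu> * (exp (- \<mu> * h) - 1)"
      using orbit_sup_flow[of h \<sigma> x] assms rate by (simp add: field_simps)
    then have "(orbit_sup (\<phi> h x \<sigma>) / \<mu> - orbit_sup x / \<mu>) / h \<le> orbit_sup x / \<mu> * (exp (- \<mu> * h) - 1) / h"
      using \<open>h \<in> {0<..<1}\<close> by (intro divide_right_mono) auto
    then show "ereal ((orbit_sup (\<phi> h x \<sigma>) / \<mu> - orbit_sup x / \<mu>) / h)
        \<le> ereal (orbit_sup x / \<mu> * ((exp (- \<mu> * h) - 1) / h))"
      by simp
  qed simp
  also have "\<dots> = ereal (orbit_sup x / \<mu> * - \<mu>)"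
    by (intro lim_imp_Limsup trivial_limit_at_right_real tendsto_ereal tendsto_mult tendsto_const quotient)
  finally show ?thesis using rate by simp
qed

lemma Lyapunov_function_orbit_sup:
  "Lyapunov_function S \<phi> (\<lambda>x. orbit_sup x / \<mu>) 1 (1 / \<mu>) (max M 1 / \<mu>)"
proof -
  have "continuous_on UNIV (\<lambda>x. orbit_sup x / \<mu>)"
    using rate by (intro continuous_on_divide continuous_on_orbit_sup continuous_on_const) auto
  moreover have "1 / \<mu> * norm x powr 1 \<le> orbit_sup x / \<mu>" for x
    using norm_le_orbit_sup[of x] rate by (simp add: divide_right_mono)
  moreover have "orbit_sup x / \<mu> \<le> max M 1 / \<mu> * norm x powr 1" for x
    using orbit_sup_le[of x] rate by (simp add: divide_right_mono)
  moreover have "dini_upper \<phi> (\<lambda>x. orbit_sup x / \<mu>) \<sigma> x \<le> ereal (- (norm x powr 1))" if "\<sigma> \<in> S" for x \<sigma>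
    using dini_upper_orbit_sup[OF that, of x] norm_le_orbit_sup[of x] rate
    by (auto intro: order_trans)
  ultimately show ?thesis
    unfolding Lyapunov_function_def using orbit_sup_nonneg rate by auto
qed

end

lemma UGES_imp_Lyapunov_function:
  fixes \<phi> :: "real \<Rightarrow> 'x::banach \<Rightarrow> (real \<Rightarrow> 'q) \<Rightarrow> 'x"
  assumes "forward_complete_system S \<phi>" "S_uniformly_continuous S \<phi>" "UGES S \<phi>"
  shows "\<exists>V p cl cu. 0 < p \<and> 0 < cl \<and> 0 < cu \<and> Lyapunov_function S \<phi> V p cl cu"
proof -
  obtain M lam where "0 < M" "0 < lam"
    and "\<And>t x \<sigma>. 0 \<le> t \<Longrightarrow> \<sigma> \<in> S \<Longrightarrow> norm (\<phi> t x \<sigma>) \<le> M * exp (- lam * t) * norm x"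
    using assms(3) unfolding UGES_def by blast
  then interpret UGES_system S \<phi> M lam "lam / 2"
    using assms by unfold_locales auto
  have "0 < 1 / (lam / 2)" "0 < max M 1 / (lam / 2)" using \<open>0 < lam\<close> by auto
  then show ?thesis using Lyapunov_function_orbit_sup zero_less_one by blast
qed

theorem corollary1:
  fixes S :: "(real \<Rightarrow> 'q) set"
    and \<phi> :: "real \<Rightarrow> 'x::banach \<Rightarrow> (real \<Rightarrow> 'q) \<Rightarrow> 'x"
  assumes sys: "forward_complete_system S \<phi>"
    and uc: "S_uniformly_continuous S \<phi>"
    and bnd: "\<exists>t1>0. \<exists>G0>0. \<forall>t\<in>{0..t1}. \<forall>x. \<forall>\<sigma>\<in>S. norm (\<phi> t x \<sigma>) \<le> G0 * norm x"
  shows "(UGES S \<phi> \<longleftrightarrow>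
           (\<exists>V :: 'x \<Rightarrow> real. \<exists>p>0. \<exists>cl>0. \<exists>cu>0.
              continuous_on UNIV V \<and> (\<forall>x. V x \<ge> 0) \<and>
              (\<forall>x. cl * norm x powr p \<le> V x \<and> V x \<le> cu * norm x powr p) \<and>
              (\<forall>x. \<forall>\<sigma>\<in>S. dini_upper \<phi> V \<sigma> x \<le> ereal (- (norm x powr p)))))
       \<and> (UGES S \<phi> \<longleftrightarrow>
           (\<exists>V :: 'x \<Rightarrow> real. \<exists>p>0. \<exists>c>0.
              (\<forall>x. V x \<ge> 0) \<and>
              (\<forall>x. \<forall>\<sigma>\<in>S. \<forall>t>0. ((\<lambda>s. V (\<phi> s x \<sigma>)) \<longlongrightarrow> V (\<phi> t x \<sigma>)) (at_left t)) \<and>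
              (\<forall>x. \<forall>\<sigma>\<in>S. dini_upper \<phi> V \<sigma> x \<le> ereal (- (norm x powr p))) \<and>
              (\<forall>x. V x \<le> c * norm x powr p)))"
proof -
  obtain t1 G0 where "0 < t1" "0 < G0"
    and small_time: "\<And>t x \<sigma>. t \<in> {0..t1} \<Longrightarrow> \<sigma> \<in> S \<Longrightarrow> norm (\<phi> t x \<sigma>) \<le> G0 * norm x"
    using bnd by blast
  note i_ii = UGES_imp_Lyapunov_function[OF sys uc]
  note ii_iii = Lyapunov_function_imp_noncoercive[OF sys]
  note iii_i = noncoercive_Lyapunov_function_imp_UGES[OF sys \<open>0 < t1\<close> \<open>0 < G0\<close> small_time]
  show ?thesis
    unfolding Lyapunov_function_def[symmetric] noncoercive_Lyapunov_function_def[symmetric]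
    using i_ii ii_iii iii_i by blast
qed

end
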